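(* Let $H=(v_1,\dots,v_6)$ be an embedded equilateral hexagon, considered up to translations and rotations, whose action-angle coordinates $(d_1,d_2,d_3,\theta_1,\theta_2,\theta_3)$ for the $T_{135}$ triangulation are defined. If the Joint Chirality-Curl satisfies $J(H)=(1,-1)$ or $J(H)=(-1,-1)$, then $\theta_i\in(\pi,2\pi)$ for $i=1,2,3$.
   Context: An equilateral hexagon is an ordered 6-tuple $H=(v_1,\dots,v_6)$ in $\mathbb{R}^3$ with $\|v_i-v_{i+1}\|=1$ (indices mod 6), edges $e_i=[v_i,v_{i+1}]$, oriented $v_1\to v_2\to\cdots\to v_6\to v_1$; embedded means non-adjacent edges are disjoint and adjacent ones meet only at their common endpoint. Standard position: $v_1=0$, $v_3$ on the positive $x$-axis, $v_5$ in the $xy$-plane with positive $y$-coordinate. Action-angle coordinates ($T_{135}$ triangulation), defined when $v_1,v_3,v_5$ are not collinear and $0<d_i<2$: $d_1=\|v_3-v_1\|$, $d_2=\|v_5-v_3\|$, $d_3=\|v_1-v_5\|$; with $m_1,m_2,m_3$ the midpoints of $[v_1,v_3],[v_3,v_5],[v_5,v_1]$, $u_1,u_2,u_3$ the unit vectors in the $xy$-plane perpendicular to these segments pointing toward the opposite vertex of triangle $v_1v_3v_5$ (toward $v_5,v_1,v_3$ respectively), and $e_z=(0,0,1)$, the angles $\theta_i\in[0,2\pi)$ are determined by $v_{2i}=m_i+\tfrac12\sqrt{4-d_i^2}(\cos\theta_i\,u_i+\sin\theta_i\,e_z)$ (regular planar hexagon: all $\theta_i=\pi$). Joint Chirality-Curl: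 $curl(H)=\operatorname{sign}\big((v_3-v_1)\times(v_5-v_1)\cdot(v_2-v_1)\big)$. For $i=2,4,6$, $T_i$ is the open triangular disk with vertices $v_{i-1},v_i,v_{i+1}$, oriented by the right-hand rule (normal $(v_i-v_{i-1})\times(v_{i+1}-v_i)$), and $\Delta_i$ is the algebraic intersection number of $T_i$ with the oriented polygon $H$. Then $J(H)=(\Delta_2\Delta_4\Delta_6,\ \Delta_2^2\Delta_4^2\Delta_6^2\,curl(H))$. *)

theory Defs
  imports "HOL-Analysis.Analysis"
begin

text \<open>A hexagon is given by H :: nat => real^3; the vertex v_i is H (i mod 6),
  so v_1,...,v_5 are H 1,...,H 5 and v_6 = v_0 = H 0.  Indices are taken mod 6.\<close>

definition vx :: "(nat \<Rightarrow> real^3) \<Rightarrow> nat \<Rightarrow> real^3" where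
  "vx H i = H (i mod 6)"

definition edge :: "(nat \<Rightarrow> real^3) \<Rightarrow> nat \<Rightarrow> (real^3) set" where
  "edge H i = closed_segment (vx H i) (vx H (i + 1))"

definition equilateral_hex :: "(nat \<Rightarrow> real^3) \<Rightarrow> bool" where
  "equilateral_hex H \<longleftrightarrow> (\<forall>i\<in>{1..6}. dist (vx H i) (vx H (i + 1)) = 1)"

definition embedded_hex :: "(nat \<Rightarrow> real^3) \<Rightarrow> bool" where
  "embedded_hex H \<longleftrightarrow>
     (\<forall>i\<in>{1..6}. edge H i \<inter> edge H (i + 1) = {vx H (i + 1)}) \<and>
     (\<forall>i\<in>{1..6}. \<forall>j\<in>{1..6}. i \<noteq> j \<and> (i + 1) mod 6 \<noteq> j mod 6 \<and> (j + 1) mod 6 \<noteq> i mod 6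
        \<longrightarrow> edge H i \<inter> edge H j = {})"

definition diag_len :: "(nat \<Rightarrow> real^3) \<Rightarrow> nat \<Rightarrow> real" where
  "diag_len H i = dist (vx H (2*i - 1)) (vx H (2*i + 1))"

definition aa_defined :: "(nat \<Rightarrow> real^3) \<Rightarrow> bool" where
  "aa_defined H \<longleftrightarrow> \<not> collinear {vx H 1, vx H 3, vx H 5} \<and>
     (\<forall>i\<in>{1,2,3}. 0 < diag_len H i \<and> diag_len H i < 2)"

text \<open>The unit vector e_z of the standard position, expressed intrinsically: the unit normal of
  the plane of v1 v3 v5 oriented by (v3 - v1) x (v5 - v1).  In standard position this is (0,0,1).\<close>
definition ez :: "(nat \<Rightarrow> real^3) \<Rightarrow> real^3" where
  "ez H = (let n = cross3 (vx H 3 - vx H 1) (vx H 5 - vx H 1) in n /\<^sub>R norm n)"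

definition udir :: "(nat \<Rightarrow> real^3) \<Rightarrow> nat \<Rightarrow> real^3" where
  "udir H i = (let a = vx H (2*i - 1); b = vx H (2*i + 1); c = vx H (2*i + 3); m = midpoint a b in
     THE u. norm u = 1 \<and> u \<bullet> ez H = 0 \<and> u \<bullet> (b - a) = 0 \<and> u \<bullet> (c - m) > 0)"

definition theta :: "(nat \<Rightarrow> real^3) \<Rightarrow> nat \<Rightarrow> real" where
  "theta H i = (let a = vx H (2*i - 1); b = vx H (2*i + 1); m = midpoint a b; d = dist a b in
     THE \<theta>. 0 \<le> \<theta> \<and> \<theta> < 2*pi \<and>
       vx H (2*i) = m + ((1/2) * sqrt (4 - d\<^sup>2)) *\<^sub>R (cos \<theta> *\<^sub>R udir H i + sin \<theta> *\<^sub>R ez H))"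

definition curl :: "(nat \<Rightarrow> real^3) \<Rightarrow> real" where
  "curl H = sgn (cross3 (vx H 3 - vx H 1) (vx H 5 - vx H 1) \<bullet> (vx H 2 - vx H 1))"

definition tri :: "(nat \<Rightarrow> real^3) \<Rightarrow> nat \<Rightarrow> (real^3) set" where
  "tri H i = rel_interior (convex hull {vx H (i - 1), vx H i, vx H (i + 1)})"

definition tri_normal :: "(nat \<Rightarrow> real^3) \<Rightarrow> nat \<Rightarrow> real^3" where
  "tri_normal H i = cross3 (vx H i - vx H (i - 1)) (vx H (i + 1) - vx H i)"

text \<open>Algebraic intersection number of the oriented disk T_i with the oriented polygon H:
  each edge e_j meeting T_i contributes the sign of (normal of T_i) . (v_(j+1) - v_j)
  (an edge crosses the plane of T_i at most once unless it lies in that plane, in which case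
  the crossing is non-transversal and contributes 0).\<close>
definition Delta :: "(nat \<Rightarrow> real^3) \<Rightarrow> nat \<Rightarrow> real" where
  "Delta H i = (\<Sum>j\<in>{1..6}. if edge H j \<inter> tri H i \<noteq> {}
       then sgn (tri_normal H i \<bullet> (vx H (j + 1) - vx H j)) else 0)"

definition JCC :: "(nat \<Rightarrow> real^3) \<Rightarrow> real \<times> real" where
  "JCC H = (Delta H 2 * Delta H 4 * Delta H 6,
            (Delta H 2)\<^sup>2 * (Delta H 4)\<^sup>2 * (Delta H 6)\<^sup>2 * curl H)"

end

theory Submission
  imports Defs
begin

(* Let N be the normal of the plane P through v1, v3, v5 (the direction e_z of standard
   position).  The second component -1 of J(H) forces curl H = -1, i.e. v2 lies strictly below
   P, and it forces Delta_2, Delta_4, Delta_6 to be nonzero.  Then v4 and v6 lie strictly below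
   P as well: if neither did, the disk T_2 would lie strictly below P while the edges e_3, ..., e_6
   stay in the closed upper half-space, so Delta_2 = 0; if v4 is below P but v6 is not, then T_6
   lies either strictly above P, away from e_1, ..., e_4, or inside P, where the polygon touches it
   only at v3, arriving from below and leaving downwards, so the two contributions cancel and
   Delta_6 = 0 (symmetrically for v6 below and v4 not).  Finally, the e_z-component of
   v_(2i) - m_i is (1/2) sqrt (4 - d_i^2) sin theta_i, so v_(2i) below P means sin theta_i < 0,
   i.e. theta_i lies in (pi, 2 pi). *)

lemma rel_interior_convex_hull_halfspace_lt:
  fixes N :: "'a::euclidean_space"
  assumes x: "x \<in> rel_interior (convex hull S)"
    and S: "\<forall>y\<in>S. N \<bullet> y \<le> c" and y0: "y0 \<in> S" "N \<bullet> y0 < c"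
  shows "N \<bullet> x < c"
proof -
  let ?K = "convex hull S"
  have "?K \<subseteq> {y. N \<bullet> y \<le> c}"
    using S by (intro hull_minimal) (auto simp: convex_halfspace_le)
  then have K: "N \<bullet> y \<le> c" if "y \<in> ?K" for y
    using that by blast
  have face: "(?K \<inter> {y. N \<bullet> y = c}) face_of ?K"
    using K by (intro face_of_Int_supporting_hyperplane_le) auto
  have "y0 \<in> ?K"
    using y0(1) by (rule hull_inc)
  then have "?K \<inter> {y. N \<bullet> y = c} \<noteq> ?K"
    using y0(2) by auto
  with face have "x \<notin> ?K \<inter> {y. N \<bullet> y = c}"
    using face_of_disjoint_rel_interior x by blast
  with K x rel_interior_subset show ?thesis by fastforce
qed

lemma rel_interior_convex_hull_hyperplane:
  fixes N :: "'a::euclidean_space"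
  assumes "x \<in> rel_interior (convex hull S)" and "\<forall>y\<in>S. N \<bullet> y = c"
  shows "N \<bullet> x = c"
proof -
  have "convex hull S \<subseteq> {y. N \<bullet> y = c}"
    using assms(2) by (intro hull_minimal) (auto simp: convex_hyperplane)
  then show ?thesis
    using assms(1) rel_interior_subset by blast
qed

lemma closed_segment_halfspace_ge:
  fixes N :: "'a::euclidean_space"
  assumes "x \<in> closed_segment p q" "c \<le> N \<bullet> p" "c \<le> N \<bullet> q"
  shows "c \<le> N \<bullet> x"
  using assms closed_segment_subset[of p "{y. c \<le> N \<bullet> y}" q] by (auto simp: convex_halfspace_ge)

lemma closed_segment_Int_hyperplane:
  fixes N :: "'a::euclidean_space"
  assumes "N \<bullet> p = c" "N \<bullet> q \<noteq> c"
  shows "closed_segment p q \<inter> {x. N \<bullet> x = c} = {p}"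
proof -
  have "x = p" if x: "x \<in> closed_segment p q" "N \<bullet> x = c" for x
  proof -
    obtain u where u: "0 \<le> u" "u \<le> 1" "x = (1 - u) *\<^sub>R p + u *\<^sub>R q"
      using x(1) unfolding in_segment(1) by blast
    have "N \<bullet> x = c + u * (N \<bullet> q - c)"
      unfolding u(3) inner_add_right inner_scaleR_right assms(1) by (simp add: algebra_simps)
    then have "u = 0"
      using x(2) assms(2) by simp
    then show ?thesis
      using u(3) by simp
  qed
  then show ?thesis
    using assms(1) by auto
qed

lemma closed_segment_Int_subset_hyperplane:
  fixes N :: "'a::euclidean_space"
  assumes T: "\<forall>x\<in>T. N \<bullet> x = c" and "N \<bullet> p = c" "N \<bullet> q \<noteq> c"
  shows "closed_segment p q \<inter> T = (if p \<in> T then {p} else {})"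
proof -
  have "closed_segment p q \<inter> T \<subseteq> closed_segment p q \<inter> {x. N \<bullet> x = c}"
    using T by blast
  then show ?thesis
    using closed_segment_Int_hyperplane[OF assms(2,3)] by auto
qed

lemma vertex_notin_rel_interior_triangle:
  fixes a b c :: "'a::euclidean_space"
  assumes "a \<notin> closed_segment b c"
  shows "a \<notin> rel_interior (convex hull {a, b, c})"
proof -
  have "a extreme_point_of (convex hull (insert a {b, c}))"
    using assms by (intro extreme_point_of_convex_hull_insert) (auto simp: segment_convex_hull)
  then have face: "{a} face_of convex hull {a, b, c}"
    by (simp add: face_of_singleton)
  have "b \<in> convex hull {a, b, c}" "b \<noteq> a"
    using assms by (auto simp: hull_inc)
  then have "{a} \<noteq> convex hull {a, b, c}"
    by blast
  with face show ?thesis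
    using face_of_disjoint_rel_interior by blast
qed

lemma cross3_diff_rotate:
  fixes a b c :: "real^3"
  shows "cross3 (b - a) (c - a) = cross3 (c - b) (a - b)"
  unfolding cross3_def vec_eq_iff forall_3 by (simp add: vector_def algebra_simps)

lemma sgn_inner_cross3_parallel:
  fixes p q N w :: "real^3"
  assumes "N \<bullet> p = 0" "N \<bullet> q = 0" "N \<noteq> 0"
  shows "sgn (cross3 p q \<bullet> w) = sgn (cross3 p q \<bullet> N) * sgn (N \<bullet> w)"
proof -
  have "(N \<bullet> N) * (cross3 p q \<bullet> w) = (cross3 p q \<bullet> N) * (N \<bullet> w)"
    using assms(1,2) unfolding cross3_def inner_vec_def sum_3
    by (simp add: vector_def) algebra
  then have "sgn (N \<bullet> N) * sgn (cross3 p q \<bullet> w) = sgn (cross3 p q \<bullet> N) * sgn (N \<bullet> w)"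
    by (metis sgn_mult)
  moreover have "sgn (N \<bullet> N) = 1"
    using assms(3) by simp
  ultimately show ?thesis
    by simp
qed

lemma vx_add_6 [simp]: "vx H (j + 6) = vx H j"
  by (simp add: vx_def)

lemma edge_mod_6: "edge H (j mod 6) = edge H j"
  by (simp add: edge_def vx_def mod_Suc_eq)

lemma edge_add_6 [simp]: "edge H (j + 6) = edge H j"
  by (metis edge_mod_6 mod_add_self2)

lemma embedded_hex_edges_disjoint:
  assumes "embedded_hex H"
  shows "edge H j \<inter> edge H (j + 2) = {}"
proof -
  have E: "edge H a \<inter> edge H b = {}"
    if "a \<in> {1..6}" "b \<in> {1..6}" "a \<noteq> b" "(a + 1) mod 6 \<noteq> b mod 6" "(b + 1) mod 6 \<noteq> a mod 6"
    for a b
    using assms that unfolding embedded_hex_def by blast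
  define r where "r = (if j mod 6 = 0 then 6 else j mod 6)"
  have r16: "r \<in> {1..6}" and r_mod: "r mod 6 = j mod 6"
    unfolding r_def by auto
  have "edge H r = edge H j"
    by (metis edge_mod_6 r_mod)
  moreover have "edge H (r + 2) = edge H (j + 2)"
    by (metis edge_mod_6 mod_add_left_eq r_mod)
  moreover have "\<forall>k\<in>{1, 2, 3, 4, 5, 6}. edge H k \<inter> edge H (k + 2) = {}"
    using E[of 1 3] E[of 2 4] E[of 3 5] E[of 4 6] E[of 5 1] E[of 6 2]
      edge_add_6[of H 1] edge_add_6[of H 2]
    by (simp del: add_2_eq_Suc')
  moreover have "r \<in> {1, 2, 3, 4, 5, 6}"
    using r16 by auto
  ultimately show ?thesis
    by metis
qed

definition segment_crossing :: "'a::real_inner set \<Rightarrow> 'a \<Rightarrow> 'a \<Rightarrow> 'a \<Rightarrow> real" where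
  "segment_crossing T n p q = (if closed_segment p q \<inter> T \<noteq> {} then sgn (n \<bullet> (q - p)) else 0)"

lemma sum_lessThan_shift_periodic:
  fixes f :: "nat \<Rightarrow> 'a::cancel_comm_monoid_add"
  assumes periodic: "\<And>j. f (j + n) = f j"
  shows "(\<Sum>k<n. f (m + k)) = (\<Sum>k<n. f k)"
proof (induction m)
  case (Suc m)
  have "f m + (\<Sum>k<n. f (Suc m + k)) = (\<Sum>k<Suc n. f (m + k))"
    unfolding sum.lessThan_Suc_shift by simp
  also have "\<dots> = (\<Sum>k<n. f (m + k)) + f m"
    using periodic[of m] by simp
  finally show ?case
    using Suc.IH by (simp add: add.commute)
qed simp

lemma Delta_eq_sum_segment_crossing:
  "Delta H i = (\<Sum>k<6. segment_crossing (tri H i) (tri_normal H i) (vx H (m + k)) (vx H (m + k + 1)))"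
proof -
  define f where "f j = segment_crossing (tri H i) (tri_normal H i) (vx H j) (vx H (j + 1))" for j
  have periodic: "f (j + 6) = f j" for j
    using vx_add_6[of H "j + 1"] by (simp add: f_def)
  have "Delta H i = (\<Sum>k<6. f (Suc k))"
    unfolding Delta_def f_def segment_crossing_def edge_def by (simp add: sum.atLeast1_atMost_eq)
  also have "\<dots> = (\<Sum>k<6. f k)"
    using sum_lessThan_shift_periodic[of f 6 1] periodic by simp
  also have "\<dots> = (\<Sum>k<6. f (m + k))"
    using sum_lessThan_shift_periodic[of f 6 m] periodic by simp
  finally show ?thesis
    by (simp add: f_def)
qed

lemma segment_crossing_eq_0_if_orthogonal: "n \<bullet> (q - p) = 0 \<Longrightarrow> segment_crossing T n p q = 0"
  by (simp add: segment_crossing_def)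

lemma segment_crossing_eq_0_if_disjoint: "closed_segment p q \<inter> T = {} \<Longrightarrow> segment_crossing T n p q = 0"
  by (simp add: segment_crossing_def)

(* The hypothesis 1 \<le> i keeps the natural-number subtraction i - 1 from truncating. *)
lemma Delta_eq_opposite_segment_crossings:
  fixes H :: "nat \<Rightarrow> real^3" and i :: nat
  assumes "1 \<le> i"
  defines "cr \<equiv> segment_crossing (tri H i) (tri_normal H i)"
  shows "Delta H i = cr (vx H (i + 1)) (vx H (i + 2)) + cr (vx H (i + 2)) (vx H (i + 3))
    + cr (vx H (i + 3)) (vx H (i + 4)) + cr (vx H (i + 4)) (vx H (i - 1))"
proof -
  have sides: "cr (vx H (i - 1)) (vx H i) = 0" "cr (vx H i) (vx H (i + 1)) = 0"
    unfolding cr_def tri_normal_def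
    using dot_cross_self(1)[of "vx H i - vx H (i - 1)"] dot_cross_self(3)
    by (auto intro: segment_crossing_eq_0_if_orthogonal simp: inner_commute)
  have "vx H (i + 5) = vx H (i - 1)"
    using assms(1) vx_add_6[of H "i - 1"] by (simp add: add.commute)
  moreover have "Delta H i = (\<Sum>k<6. cr (vx H (i - 1 + k)) (vx H (i - 1 + k + 1)))"
    unfolding cr_def by (rule Delta_eq_sum_segment_crossing)
  ultimately show ?thesis
    using assms(1) sides by (simp add: numeral_eq_Suc)
qed

lemma Delta_eq_0_if_triangle_off_plane:
  fixes N :: "real^3"
  assumes "1 \<le> i"
    and base: "N \<bullet> vx H (i - 1) = c" "N \<bullet> vx H (i + 1) = c" "N \<bullet> vx H (i + 3) = c"
    and apex: "N \<bullet> vx H i < c"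
    and above: "c \<le> N \<bullet> vx H (i + 2)" "c \<le> N \<bullet> vx H (i + 4)"
  shows "Delta H i = 0"
proof -
  have tri: "N \<bullet> x < c" if "x \<in> tri H i" for x
    using that base apex
      rel_interior_convex_hull_halfspace_lt[of x "{vx H (i - 1), vx H i, vx H (i + 1)}" N c "vx H i"]
    unfolding tri_def by auto
  have no_crossing: "segment_crossing (tri H i) (tri_normal H i) p q = 0"
    if "c \<le> N \<bullet> p" "c \<le> N \<bullet> q" for p q
  proof (rule segment_crossing_eq_0_if_disjoint)
    show "closed_segment p q \<inter> tri H i = {}"
      using closed_segment_halfspace_ge[OF _ that] tri by force
  qed
  show ?thesis
    unfolding Delta_eq_opposite_segment_crossings[OF \<open>1 \<le> i\<close>]
    using base above by (simp add: no_crossing)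
qed

lemma embedded_hex_base_ends_notin_tri:
  assumes "embedded_hex H" "1 \<le> i"
  shows "vx H (i - 1) \<notin> tri H i" "vx H (i + 1) \<notin> tri H i"
proof -
  have "i + 4 + 2 = i + 6"
    by simp
  then have "edge H (i + 4 + 2) = edge H i"
    by (simp only: edge_add_6)
  then have "edge H (i + 4) \<inter> edge H i = {}"
    using embedded_hex_edges_disjoint[OF assms(1), of "i + 4"] by simp
  moreover have "vx H (i + 5) = vx H (i - 1)"
    using assms(2) vx_add_6[of H "i - 1"] by (simp add: add.commute)
  ultimately have "vx H (i - 1) \<notin> closed_segment (vx H i) (vx H (i + 1))"
    unfolding edge_def by (auto simp: numeral_eq_Suc)
  then show "vx H (i - 1) \<notin> tri H i"
    unfolding tri_def by (rule vertex_notin_rel_interior_triangle)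
  have "vx H (i + 1) \<notin> closed_segment (vx H (i - 1)) (vx H i)"
    using embedded_hex_edges_disjoint[OF assms(1), of "i - 1"] assms(2)
    unfolding edge_def by (auto simp: numeral_eq_Suc)
  then have "vx H (i + 1) \<notin> rel_interior (convex hull {vx H (i + 1), vx H (i - 1), vx H i})"
    by (rule vertex_notin_rel_interior_triangle)
  then show "vx H (i + 1) \<notin> tri H i"
    unfolding tri_def by (simp add: insert_commute)
qed

lemma segment_crossings_cancel_at_touching_vertex:
  fixes N :: "real^3"
  assumes T: "\<forall>x\<in>T. N \<bullet> x = c" and "N \<bullet> a = 0" "N \<bullet> b = 0"
    and "N \<bullet> p < c" "N \<bullet> q = c" "N \<bullet> r < c"
  shows "segment_crossing T (cross3 a b) p q + segment_crossing T (cross3 a b) q r = 0"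
proof -
  have meet: "closed_segment p q \<inter> T = (if q \<in> T then {q} else {})"
    "closed_segment q r \<inter> T = (if q \<in> T then {q} else {})"
    using closed_segment_Int_subset_hyperplane[OF T, of q p]
      closed_segment_Int_subset_hyperplane[OF T, of q r] assms(4-6)
    by (simp_all add: closed_segment_commute)
  have "N \<noteq> 0"
    using assms(4,5) by auto
  then have "sgn (cross3 a b \<bullet> (q - p)) + sgn (cross3 a b \<bullet> (r - q))
      = sgn (cross3 a b \<bullet> N) * (sgn (N \<bullet> (q - p)) + sgn (N \<bullet> (r - q)))"
    using sgn_inner_cross3_parallel[OF assms(2,3), of "q - p"]
      sgn_inner_cross3_parallel[OF assms(2,3), of "r - q"]
    by (simp add: distrib_left)
  also have "\<dots> = 0"
    using assms(4-6) by (simp add: inner_diff_right)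
  finally show ?thesis
    using meet by (simp add: segment_crossing_def)
qed

lemma Delta_eq_0_if_triangle_in_plane:
  fixes N :: "real^3"
  assumes "embedded_hex H" "1 \<le> i"
    and plane: "N \<bullet> vx H (i - 1) = c" "N \<bullet> vx H i = c" "N \<bullet> vx H (i + 1) = c"
      "N \<bullet> vx H (i + 3) = c"
    and below: "N \<bullet> vx H (i + 2) < c" "N \<bullet> vx H (i + 4) < c"
  shows "Delta H i = 0"
proof -
  have tri: "\<forall>x\<in>tri H i. N \<bullet> x = c"
    using plane rel_interior_convex_hull_hyperplane[of _ "{vx H (i - 1), vx H i, vx H (i + 1)}" N c]
    unfolding tri_def by auto
  have "N \<bullet> (vx H i - vx H (i - 1)) = 0" "N \<bullet> (vx H (i + 1) - vx H i) = 0"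
    using plane by (simp_all add: inner_diff_right)
  then have "segment_crossing (tri H i) (tri_normal H i) (vx H (i + 2)) (vx H (i + 3))
      + segment_crossing (tri H i) (tri_normal H i) (vx H (i + 3)) (vx H (i + 4)) = 0"
    unfolding tri_normal_def using tri plane below
    by (intro segment_crossings_cancel_at_touching_vertex)
  moreover have "segment_crossing (tri H i) (tri_normal H i) (vx H (i + 1)) (vx H (i + 2)) = 0"
    "segment_crossing (tri H i) (tri_normal H i) (vx H (i + 4)) (vx H (i - 1)) = 0"
    using closed_segment_Int_subset_hyperplane[OF tri, of "vx H (i + 1)" "vx H (i + 2)"]
      closed_segment_Int_subset_hyperplane[OF tri, of "vx H (i - 1)" "vx H (i + 4)"]
      embedded_hex_base_ends_notin_tri[OF assms(1,2)] plane below
    by (simp_all add: segment_crossing_def closed_segment_commute)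
  ultimately show ?thesis
    unfolding Delta_eq_opposite_segment_crossings[OF assms(2)] by simp
qed

lemma Delta_eq_0_if_apex_not_below:
  fixes N :: "real^3"
  assumes "embedded_hex H" "1 \<le> i"
    and base: "N \<bullet> vx H (i - 1) = c" "N \<bullet> vx H (i + 1) = c" "N \<bullet> vx H (i + 3) = c"
    and below: "N \<bullet> vx H (i + 2) < c" "N \<bullet> vx H (i + 4) < c"
    and apex: "c \<le> N \<bullet> vx H i"
  shows "Delta H i = 0"
proof (cases "N \<bullet> vx H i = c")
  case True
  then show ?thesis
    using Delta_eq_0_if_triangle_in_plane assms by blast
next
  case False
  then have "(- N) \<bullet> vx H i < - c"
    using apex by simp
  then show ?thesis
    using Delta_eq_0_if_triangle_off_plane[of i "- N" H "- c"] assms(2) base below by simp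
qed

lemma even_vertices_below_base_plane:
  fixes N :: "real^3"
  assumes "embedded_hex H"
    and base: "N \<bullet> vx H 1 = c" "N \<bullet> vx H 3 = c" "N \<bullet> vx H 5 = c"
    and "N \<bullet> vx H 2 < c"
    and "Delta H 2 \<noteq> 0" "Delta H 4 \<noteq> 0" "Delta H 6 \<noteq> 0"
  shows "N \<bullet> vx H 4 < c \<and> N \<bullet> vx H 6 < c"
proof -
  have periodic: "vx H 7 = vx H 1" "vx H 8 = vx H 2" "vx H 9 = vx H 3" "vx H 10 = vx H 4"
    by (simp_all add: vx_def)
  have "\<not> (c \<le> N \<bullet> vx H 4 \<and> c \<le> N \<bullet> vx H 6)"
    using Delta_eq_0_if_triangle_off_plane[of 2 N H c] assms by auto
  moreover have "N \<bullet> vx H 6 < c" if "N \<bullet> vx H 4 < c"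
    using Delta_eq_0_if_apex_not_below[of H 6 N c] assms that periodic by force
  moreover have "N \<bullet> vx H 4 < c" if "N \<bullet> vx H 6 < c"
    using Delta_eq_0_if_apex_not_below[of H 4 N c] assms that periodic by force
  ultimately show ?thesis
    by linarith
qed

definition circle_angle :: "'a::real_vector \<Rightarrow> real \<Rightarrow> 'a \<Rightarrow> 'a \<Rightarrow> 'a \<Rightarrow> real" where
  "circle_angle m r u e v = (THE \<theta>. 0 \<le> \<theta> \<and> \<theta> < 2 * pi \<and> v = m + r *\<^sub>R (cos \<theta> *\<^sub>R u + sin \<theta> *\<^sub>R e))"

lemma sin_cos_eq_imp_eq:
  fixes s t :: real
  assumes "0 \<le> s" "s < 2 * pi" "0 \<le> t" "t < 2 * pi" "cos s = cos t" "sin s = sin t"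
  shows "s = t"
proof -
  obtain n :: int where n: "s = t + 2 * pi * n"
    using sin_cos_eq_iff assms(5,6) by metis
  then have "\<bar>2 * pi * n\<bar> < 2 * pi * 1"
    using assms(1-4) by auto
  then have "\<bar>n\<bar> < 1"
    by (simp add: abs_mult)
  then show ?thesis
    using n by simp
qed

lemma circle_angle_eqI:
  fixes m u e v :: "'a::real_inner"
  assumes unit: "u \<bullet> u = 1" "e \<bullet> e = 1" "u \<bullet> e = 0" and "0 < r"
    and t: "0 \<le> t" "t < 2 * pi" and v: "v = m + r *\<^sub>R (cos t *\<^sub>R u + sin t *\<^sub>R e)"
  shows "circle_angle m r u e v = t"
  unfolding circle_angle_def
proof (rule the_equality)
  show "0 \<le> t \<and> t < 2 * pi \<and> v = m + r *\<^sub>R (cos t *\<^sub>R u + sin t *\<^sub>R e)"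
    using t v by simp
next
  fix s
  assume s: "0 \<le> s \<and> s < 2 * pi \<and> v = m + r *\<^sub>R (cos s *\<^sub>R u + sin s *\<^sub>R e)"
  have coordinates: "(v - m) \<bullet> u = r * cos \<theta>" "(v - m) \<bullet> e = r * sin \<theta>"
    if "v = m + r *\<^sub>R (cos \<theta> *\<^sub>R u + sin \<theta> *\<^sub>R e)" for \<theta>
    using unit inner_commute[of e u] unfolding that by (simp_all add: inner_add_left scaleR_add_right)
  have "cos s = cos t" "sin s = sin t"
    using coordinates[OF v] coordinates[of s] s \<open>0 < r\<close> by auto
  then show "s = t"
    using sin_cos_eq_imp_eq s t by blast
qed

lemma circle_angle_in_lower_half:
  fixes m u e v :: "'a::real_inner"
  assumes unit: "u \<bullet> u = 1" "e \<bullet> e = 1" "u \<bullet> e = 0" and "0 < r"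
    and span: "v - m = ((v - m) \<bullet> u) *\<^sub>R u + ((v - m) \<bullet> e) *\<^sub>R e"
    and radius: "norm (v - m) = r"
    and below: "(v - m) \<bullet> e < 0"
  shows "circle_angle m r u e v \<in> {pi<..<2 * pi}"
proof -
  define \<alpha> \<beta> where "\<alpha> = (v - m) \<bullet> u" and "\<beta> = (v - m) \<bullet> e"
  have "r\<^sup>2 = (v - m) \<bullet> (v - m)"
    using radius power2_norm_eq_inner[of "v - m"] by simp
  also have "\<dots> = \<alpha>\<^sup>2 + \<beta>\<^sup>2"
    using unit span[folded \<alpha>_def \<beta>_def]
    by (metis inner_add_left inner_add_right inner_scaleR_left inner_scaleR_right inner_commute
        \<alpha>_def \<beta>_def power2_eq_square mult.commute)
  finally have sq: "\<alpha>\<^sup>2 + \<beta>\<^sup>2 = r\<^sup>2"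
    by simp
  have "(\<alpha> / r)\<^sup>2 + (\<beta> / r)\<^sup>2 = (\<alpha>\<^sup>2 + \<beta>\<^sup>2) / r\<^sup>2"
    by (simp add: power_divide add_divide_distrib)
  then have "(\<alpha> / r)\<^sup>2 + (\<beta> / r)\<^sup>2 = 1"
    using sq \<open>0 < r\<close> by simp
  then obtain t where t: "0 \<le> t" "t < 2 * pi" "\<alpha> / r = cos t" "\<beta> / r = sin t"
    by (rule sincos_total_2pi)
  have "v = m + r *\<^sub>R (cos t *\<^sub>R u + sin t *\<^sub>R e)"
    using span[folded \<alpha>_def \<beta>_def] t(3,4) \<open>0 < r\<close> by (simp add: field_simps scaleR_add_right)
  then have "circle_angle m r u e v = t"
    by (rule circle_angle_eqI[OF unit \<open>0 < r\<close> t(1,2)])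
  moreover have "sin t < 0"
    using t(4) below \<open>0 < r\<close> unfolding \<beta>_def by (metis divide_neg_pos)
  then have "pi < t"
    using sin_ge_zero t(1) by (meson not_le)
  ultimately show ?thesis
    using t(2) by simp
qed

lemma orthogonal_decomposition_cross3:
  fixes e f w :: "real^3"
  assumes "e \<bullet> e = 1" "e \<bullet> f = 0" "w \<bullet> f = 0"
  shows "(f \<bullet> f) *\<^sub>R w = ((f \<bullet> f) * (w \<bullet> e)) *\<^sub>R e + (w \<bullet> cross3 e f) *\<^sub>R cross3 e f"
  using assms unfolding cross3_def inner_vec_def sum_3 vec_eq_iff forall_3
  by (simp add: vector_def) algebra

lemma unit_normal_cross3:
  fixes x y :: "real^3"
  assumes "cross3 x y \<noteq> 0"
  defines "e \<equiv> cross3 x y /\<^sub>R norm (cross3 x y)"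
  shows "e \<bullet> e = 1" "e \<bullet> x = 0" "e \<bullet> cross3 x y = norm (cross3 x y)"
  using assms dot_cross_self(1)[of x y] unfolding e_def
  by (simp_all add: inner_commute power2_eq_square flip: power2_norm_eq_inner)

lemma cross3_orthonormal_frame:
  fixes e f :: "real^3"
  assumes "e \<bullet> e = 1" "e \<bullet> f = 0" "f \<noteq> 0"
  defines "u \<equiv> cross3 e f /\<^sub>R norm f"
  shows "u \<bullet> u = 1" "u \<bullet> e = 0" "u \<bullet> f = 0"
    and "\<And>w. w \<bullet> f = 0 \<Longrightarrow> w = (w \<bullet> u) *\<^sub>R u + (w \<bullet> e) *\<^sub>R e"
proof -
  have "(norm (cross3 e f))\<^sup>2 = (norm f)\<^sup>2"
    using norm_cross_dot[of e f] assms(1,2) by (simp add: norm_eq_sqrt_inner)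
  then have "norm (cross3 e f) = norm f"
    by (metis norm_ge_zero power2_eq_iff_nonneg)
  then show "u \<bullet> u = 1"
    using assms(3) unfolding u_def by (simp add: dot_square_norm)
  show "u \<bullet> e = 0" "u \<bullet> f = 0"
    unfolding u_def using dot_cross_self(1,3)[of e f] by (simp_all add: inner_commute)
  show "w = (w \<bullet> u) *\<^sub>R u + (w \<bullet> e) *\<^sub>R e" if "w \<bullet> f = 0" for w
  proof -
    have "(f \<bullet> f) *\<^sub>R ((w \<bullet> u) *\<^sub>R u + (w \<bullet> e) *\<^sub>R e)
        = ((f \<bullet> f) * (w \<bullet> e)) *\<^sub>R e + (w \<bullet> cross3 e f) *\<^sub>R cross3 e f"
      using assms(3) unfolding u_def power2_norm_eq_inner[symmetric]
      by (simp add: scaleR_add_right power2_eq_square field_simps)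
    also have "\<dots> = (f \<bullet> f) *\<^sub>R w"
      using orthogonal_decomposition_cross3[OF assms(1,2) that] by simp
    finally show ?thesis
      using assms(3) by auto
  qed
qed

lemma inward_unit_normal_eq:
  fixes a b c :: "real^3"
  defines "N \<equiv> cross3 (b - a) (c - a)"
  defines "e \<equiv> N /\<^sub>R norm N"
  assumes "N \<noteq> 0"
  shows "(THE u. norm u = 1 \<and> u \<bullet> e = 0 \<and> u \<bullet> (b - a) = 0 \<and> u \<bullet> (c - midpoint a b) > 0)
    = cross3 e (b - a) /\<^sub>R norm (b - a)"
    (is "(THE u. ?inward u) = ?u0")
proof -
  note e = unit_normal_cross3[of "b - a" "c - a", folded N_def, folded e_def, OF assms(3)]
  have "b - a \<noteq> 0"
    using assms(3) unfolding N_def by auto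
  note frame = cross3_orthonormal_frame[OF e(1,2) this]
  have "c - midpoint a b = (c - a) - (1/2) *\<^sub>R (b - a)"
    unfolding midpoint_def by (simp add: scaleR_diff_right scaleR_add_right)
  then have "?u0 \<bullet> (c - midpoint a b) = ?u0 \<bullet> (c - a) - (1/2) * (?u0 \<bullet> (b - a))"
    by (simp only: inner_diff_right inner_scaleR_right)
  also have "\<dots> = (cross3 e (b - a) \<bullet> (c - a)) / norm (b - a)"
    unfolding frame(3) by (metis diff_zero mult_zero_right inner_scaleR_left divide_inverse_commute)
  also have "cross3 e (b - a) \<bullet> (c - a) = norm N"
    using cross_triple[of e "b - a" "c - a"] e(3) unfolding N_def by (simp add: inner_commute)
  finally have "0 < ?u0 \<bullet> (c - midpoint a b)"
    using assms(3) \<open>b - a \<noteq> 0\<close> by simp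
  show ?thesis
  proof (rule the_equality)
    show "?inward ?u0"
      using frame(1-3) \<open>0 < ?u0 \<bullet> (c - midpoint a b)\<close> by (simp add: norm_eq_sqrt_inner)
  next
    fix u
    assume u: "?inward u"
    then have u_eq: "u = (u \<bullet> ?u0) *\<^sub>R ?u0"
      using frame(4)[of u] by simp
    then have "\<bar>u \<bullet> ?u0\<bar> = 1"
      using u frame(1) by (metis norm_eq_sqrt_inner norm_scaleR mult.right_neutral real_sqrt_one)
    moreover have "0 < u \<bullet> ?u0"
      using u \<open>0 < ?u0 \<bullet> (c - midpoint a b)\<close> arg_cong[OF u_eq, of "\<lambda>x. x \<bullet> (c - midpoint a b)"]
      by (simp add: zero_less_mult_iff)
    ultimately show "u = ?u0"
      using u_eq by simp
  qed
qed

lemma apex_over_midpoint: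
  fixes a b v :: "'a::real_inner"
  assumes "dist v a = 1" "dist v b = 1"
  shows "(v - midpoint a b) \<bullet> (b - a) = 0"
    and "norm (v - midpoint a b) = (1/2) * sqrt (4 - (dist a b)\<^sup>2)"
proof -
  define x y where "x = v - a" and "y = v - b"
  have xy: "x \<bullet> x = 1" "y \<bullet> y = 1"
    using assms unfolding x_def y_def dist_norm by (simp_all flip: power2_norm_eq_inner)
  have w: "v - midpoint a b = (1/2) *\<^sub>R (x + y)" and f: "b - a = x - y"
    unfolding x_def y_def midpoint_def by (simp_all add: algebra_simps flip: scaleR_add_left)
  show "(v - midpoint a b) \<bullet> (b - a) = 0"
    unfolding w f using xy by (simp add: algebra_simps inner_commute add_divide_distrib[symmetric])
  have "(dist a b)\<^sup>2 = 2 - 2 * (x \<bullet> y)"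
    using xy unfolding dist_norm power2_norm_eq_inner norm_minus_commute[of a b] f
    by (simp add: algebra_simps inner_commute)
  moreover have "(norm (v - midpoint a b))\<^sup>2 = (2 + 2 * (x \<bullet> y)) / 4"
    using xy unfolding power2_norm_eq_inner w by (simp add: algebra_simps inner_commute)
  ultimately have "(norm (v - midpoint a b))\<^sup>2 = (4 - (dist a b)\<^sup>2) / 4"
    by simp
  then have "norm (v - midpoint a b) = sqrt ((4 - (dist a b)\<^sup>2) / 4)"
    by (simp add: real_sqrt_unique)
  then show "norm (v - midpoint a b) = (1/2) * sqrt (4 - (dist a b)\<^sup>2)"
    by (simp add: real_sqrt_divide)
qed

lemma circle_angle_apex_below:
  fixes a b c v :: "real^3"
  defines "N \<equiv> cross3 (b - a) (c - a)"
  defines "e \<equiv> N /\<^sub>R norm N"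
  assumes "N \<noteq> 0" "dist a b < 2" "dist v a = 1" "dist v b = 1" and below: "N \<bullet> (v - a) < 0"
  shows "circle_angle (midpoint a b) ((1/2) * sqrt (4 - (dist a b)\<^sup>2))
      (THE u. norm u = 1 \<and> u \<bullet> e = 0 \<and> u \<bullet> (b - a) = 0 \<and> u \<bullet> (c - midpoint a b) > 0) e v
    \<in> {pi<..<2 * pi}"
proof -
  note e = unit_normal_cross3[of "b - a" "c - a", folded N_def, folded e_def, OF \<open>N \<noteq> 0\<close>]
  have "b - a \<noteq> 0"
    using \<open>N \<noteq> 0\<close> unfolding N_def by auto
  note frame = cross3_orthonormal_frame[OF e(1,2) this]
  define w where "w = v - midpoint a b"
  have "(dist a b)\<^sup>2 < 2\<^sup>2"
    using \<open>dist a b < 2\<close> by (intro power_strict_mono) auto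
  then have "0 < (1/2) * sqrt (4 - (dist a b)\<^sup>2)"
    by simp
  moreover have "w \<bullet> e < 0"
  proof -
    have "w = (v - a) - (1/2) *\<^sub>R (b - a)"
      unfolding w_def midpoint_def by (simp add: scaleR_diff_right scaleR_add_right)
    then have "w \<bullet> e = (v - a) \<bullet> e"
      using e(2) by (simp add: inner_diff_left inner_diff_right inner_commute)
    then show ?thesis
      using below \<open>N \<noteq> 0\<close> unfolding e_def by (simp add: inner_commute mult_pos_neg)
  qed
  ultimately show ?thesis
    unfolding inward_unit_normal_eq[of b a c, folded N_def, folded e_def, OF \<open>N \<noteq> 0\<close>]
    using circle_angle_in_lower_half[OF frame(1) e(1) frame(2)] frame(4)
      apex_over_midpoint[OF \<open>dist v a = 1\<close> \<open>dist v b = 1\<close>]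
    unfolding w_def by blast
qed

definition base_normal :: "(nat \<Rightarrow> real^3) \<Rightarrow> real^3" where
  "base_normal H = cross3 (vx H 3 - vx H 1) (vx H 5 - vx H 1)"

lemma base_normal_nonzero:
  assumes "aa_defined H"
  shows "base_normal H \<noteq> 0"
proof -
  have "\<not> collinear {vx H 3, vx H 1, vx H 5}"
    using assms unfolding aa_defined_def by (simp add: insert_commute)
  then have "\<not> collinear {0, vx H 3 - vx H 1, vx H 5 - vx H 1}"
    by (subst (asm) collinear_3) (simp add: NO_MATCH_def)
  then show ?thesis
    unfolding base_normal_def by (simp add: cross_eq_0)
qed

lemma base_normal_inner_odd_vertex:
  assumes "i \<in> {1, 2, 3}"
  shows "base_normal H \<bullet> vx H (2 * i - 1) = base_normal H \<bullet> vx H 1"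
proof -
  have "base_normal H \<bullet> (vx H 3 - vx H 1) = 0" "base_normal H \<bullet> (vx H 5 - vx H 1) = 0"
    unfolding base_normal_def using dot_cross_self(3) dot_cross_self(1) by (simp_all add: inner_commute)
  then show ?thesis
    using assms by (auto simp: inner_diff_right)
qed

lemma base_normal_rotate:
  assumes "i \<in> {1, 2, 3}"
  shows "cross3 (vx H (2 * i + 1) - vx H (2 * i - 1)) (vx H (2 * i + 3) - vx H (2 * i - 1)) = base_normal H"
proof -
  have "vx H 7 = vx H 1" "vx H 9 = vx H 3"
    by (simp_all add: vx_def)
  then show ?thesis
    using assms cross3_diff_rotate[where a = "vx H 1" and b = "vx H 3" and c = "vx H 5"]
      cross3_diff_rotate[where a = "vx H 3" and b = "vx H 5" and c = "vx H 1"]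
    unfolding base_normal_def by auto
qed

lemma theta_in_lower_half:
  assumes "equilateral_hex H" "aa_defined H" "i \<in> {1, 2, 3}"
    and below: "base_normal H \<bullet> vx H (2 * i) < base_normal H \<bullet> vx H 1"
  shows "pi < theta H i \<and> theta H i < 2 * pi"
proof -
  define a b c where "a = vx H (2 * i - 1)" and "b = vx H (2 * i + 1)" and "c = vx H (2 * i + 3)"
  have N: "cross3 (b - a) (c - a) = base_normal H"
    unfolding a_def b_def c_def using assms(3) by (rule base_normal_rotate)
  have ez: "ez H = cross3 (b - a) (c - a) /\<^sub>R norm (cross3 (b - a) (c - a))"
    unfolding N ez_def base_normal_def Let_def ..
  have "udir H i = (THE u. norm u = 1 \<and> u \<bullet> ez H = 0 \<and> u \<bullet> (b - a) = 0 \<and> u \<bullet> (c - midpoint a b) > 0)"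
    unfolding udir_def a_def b_def c_def Let_def ..
  moreover have "theta H i = circle_angle (midpoint a b) ((1/2) * sqrt (4 - (dist a b)\<^sup>2)) (udir H i) (ez H) (vx H (2 * i))"
    unfolding theta_def circle_angle_def a_def b_def Let_def ..
  moreover have "dist a b < 2"
    using assms(2,3) unfolding aa_defined_def diag_len_def a_def b_def by blast
  moreover have "dist (vx H (2 * i)) a = 1" "dist (vx H (2 * i)) b = 1"
  proof -
    have side: "dist (vx H j) (vx H (Suc j)) = 1" if "j \<in> {1..6}" for j
      using assms(1) that unfolding equilateral_hex_def by simp
    show "dist (vx H (2 * i)) a = 1" "dist (vx H (2 * i)) b = 1"
      using assms(3) side[of "2 * i - 1"] side[of "2 * i"] unfolding a_def b_def
      by (auto simp: dist_commute numeral_eq_Suc)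
  qed
  moreover have "cross3 (b - a) (c - a) \<bullet> (vx H (2 * i) - a) < 0"
    using below base_normal_inner_odd_vertex[OF assms(3), of H] unfolding N
    by (simp add: a_def inner_diff_right)
  ultimately show ?thesis
    using circle_angle_apex_below[of b a c "vx H (2 * i)"] base_normal_nonzero[OF assms(2)]
    unfolding ez N by simp
qed

lemma JCC_snd_eq_neg_one:
  assumes "snd (JCC H) = -1"
  shows "curl H < 0" "Delta H 2 \<noteq> 0" "Delta H 4 \<noteq> 0" "Delta H 6 \<noteq> 0"
proof -
  have prod: "((Delta H 2)\<^sup>2 * (Delta H 4)\<^sup>2 * (Delta H 6)\<^sup>2) * curl H = -1"
    using assms unfolding JCC_def by simp
  then show "Delta H 2 \<noteq> 0" "Delta H 4 \<noteq> 0" "Delta H 6 \<noteq> 0"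
    by auto
  show "curl H < 0"
  proof (rule ccontr)
    assume "\<not> curl H < 0"
    then have "0 \<le> ((Delta H 2)\<^sup>2 * (Delta H 4)\<^sup>2 * (Delta H 6)\<^sup>2) * curl H"
      by simp
    then show False
      using prod by simp
  qed
qed

theorem mainTheorem3:
  fixes H :: "nat \<Rightarrow> real^3"
  assumes "equilateral_hex H"
    and "embedded_hex H"
    and "aa_defined H"
    and "JCC H = (1, -1) \<or> JCC H = (-1, -1)"
  shows "\<forall>i\<in>{1,2,3::nat}. pi < theta H i \<and> theta H i < 2 * pi"
proof -
  define N where "N = base_normal H"
  have "snd (JCC H) = -1"
    using assms(4) by auto
  note JCC = JCC_snd_eq_neg_one[OF this]
  have "N \<bullet> vx H 2 < N \<bullet> vx H 1"
    using JCC(1) unfolding curl_def N_def base_normal_def by (simp add: sgn_less inner_diff_right)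
  moreover have "N \<bullet> vx H 3 = N \<bullet> vx H 1" "N \<bullet> vx H 5 = N \<bullet> vx H 1"
    using base_normal_inner_odd_vertex[of 2 H] base_normal_inner_odd_vertex[of 3 H] by (simp_all add: N_def)
  ultimately have "N \<bullet> vx H (2 * i) < N \<bullet> vx H 1" if "i \<in> {1, 2, 3}" for i
    using that even_vertices_below_base_plane[OF assms(2) refl _ _ _ JCC(2-4)] by auto
  then show ?thesis
    using theta_in_lower_half[OF assms(1,3)] unfolding N_def by blast
qed

end
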